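(* Let $0\le\epsilon<1$ and let $\omega=(\omega_n)_{n\ge0}$ be a Markov chain on $\{-1,+1\}$ with transition matrix $Q=\begin{pmatrix}\epsilon&1-\epsilon\\1-\epsilon&\epsilon\end{pmatrix}$ started from its invariant distribution $\frac12(\delta_{-1}+\delta_{+1})$ (so $f(x)=x$). Set $p(\epsilon)=\sum_{t\ge1}K(t)\frac{1+(2\epsilon-1)^t}{2}$. Then the annealed critical point of the pinning model with disorder $\omega$ is $$h_c^a(\beta)=-\log\left(p(\epsilon)\cosh\beta+\sqrt{p(\epsilon)^2\cosh^2\beta-2p(\epsilon)+1}\right),\qquad \beta\ge0.$$
   Context: $K(n)$, $n\ge1$, is a probability distribution on $\{1,2,\dots\}$ with $K(n)>0$ for all $n$ (the interarrival law of a recurrent renewal process $\tau$ with $\tau_0=0$, $\delta_n=\mathbf 1_{\{n\in\tau\}}$). The partition function is $Z_{N,\beta,h,\omega}=E\big[\exp\big(\sum_{n=1}^N(\beta\omega_n+h)\delta_n\big)\delta_N\big]$, and the annealed critical point is $h_c^a(\beta)=\sup\{h: \lim_N\frac1N\log\mathbb{E}Z_{N,\beta,h,\omega}=0\}$, $\mathbb{E}$ denoting average over $\omega$. *)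

theory Defs
  imports Complex_Main "HOL-Library.FuncSet"
begin

text \<open>Probability that the renewal process (interarrival law K, tau_0 = 0) satisfies
  tau \<inter> [1, max S] = S, for a finite S of positive integers:
  product of K over the gaps between consecutive points (starting from 0).\<close>
definition renewal_weight :: "(nat \<Rightarrow> real) \<Rightarrow> nat set \<Rightarrow> real" where
  "renewal_weight K S = (\<Prod>s\<in>S. K (s - Max (insert 0 {t\<in>S. t < s})))"

text \<open>Law of (omega_0,...,omega_N) for the two-state Markov chain on {-1,+1} with
  transition matrix [[eps,1-eps],[1-eps,eps]] started from the uniform (invariant) law.\<close>
definition mc_prob :: "real \<Rightarrow> nat \<Rightarrow> (nat \<Rightarrow> real) \<Rightarrow> real" where
  "mc_prob \<epsilon> N w = (1/2) * (\<Prod>n\<in>{1..N}. (if w n = w (n - 1) then \<epsilon> else 1 - \<epsilon>))"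

text \<open>Quenched partition function
  Z_{N,beta,h,omega} = E[exp(sum_{n=1}^N (beta omega_n + h) delta_n) delta_N],
  written out as a sum over renewal configurations tau \<inter> [1,N] = S with N \<in> S.\<close>
definition Zq :: "(nat \<Rightarrow> real) \<Rightarrow> nat \<Rightarrow> real \<Rightarrow> real \<Rightarrow> (nat \<Rightarrow> real) \<Rightarrow> real" where
  "Zq K N \<beta> h w = (\<Sum>S\<in>{S. S \<subseteq> {1..N} \<and> N \<in> S}.
      renewal_weight K S * exp (\<Sum>n\<in>S. \<beta> * w n + h))"

definition Zann :: "(nat \<Rightarrow> real) \<Rightarrow> real \<Rightarrow> nat \<Rightarrow> real \<Rightarrow> real \<Rightarrow> real" where
  "Zann K \<epsilon> N \<beta> h = (\<Sum>w\<in>PiE {0..N} (\<lambda>_. {-1, 1}). mc_prob \<epsilon> N w * Zq K N \<beta> h w)"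

definition hc_ann :: "(nat \<Rightarrow> real) \<Rightarrow> real \<Rightarrow> real \<Rightarrow> real" where
  "hc_ann K \<epsilon> \<beta> = Sup {h. (\<lambda>N. ln (Zann K \<epsilon> N \<beta> h) / real N) \<longlonglongrightarrow> 0}"

end

theory Submission
  imports Defs
begin

(*
  Split the annealed partition function according to the final state of the chain,
  Zann N = Zann_at N 1 + Zann_at N (-1).  Decomposing a renewal configuration at its last point
  m before N and using the Markov property of the disorder yields a multitype renewal equation
    Zann_at N sigma = e^(beta sigma + h) (K N / 2 + sum_{t<N} K t sum_tau P_t(tau, sigma) Zann_at (N-t) tau)
  with the t-step transition probabilities P_t (Sections 1 and 2).  For an abstract equation
  of this kind, a positive vector c that is super-harmonic for the kernel bounds the solution,
  while sub-harmonicity with a factor q for a truncated kernel forces geometric growth (Section 3).  Summed over t, the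
  kernel becomes the 2x2 matrix e^(beta sigma) (p if tau = sigma, 1 - p otherwise), whose Perron
  eigenvalue is rho = p cosh beta + sqrt (p^2 cosh^2 beta - 2p + 1) with an explicit positive
  eigenvector c (Section 5).  Hence the free energy vanishes at h = - ln rho and is positive for
  h > - ln rho, so the critical point is - ln rho (Section 6).
*)

section \<open>The two-state Markov chain\<close>

lemma sum_PiE_Suc:
  "(\<Sum>w\<in>PiE {0..Suc N} B. f w) = (\<Sum>w\<in>PiE {0..N} B. \<Sum>x\<in>B (Suc N). f (w(Suc N := x)))"
proof -
  have "(\<Sum>w\<in>PiE {0..Suc N} B. f w)
      = (\<Sum>w\<in>(\<lambda>(y, g). g(Suc N := y)) ` (B (Suc N) \<times> PiE {0..N} B). f w)"
    by (simp add: atLeast0_atMost_Suc PiE_insert_eq)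
  also have "\<dots> = (\<Sum>(y, g)\<in>B (Suc N) \<times> PiE {0..N} B. f (g(Suc N := y)))"
  proof -
    have "inj_on (\<lambda>(y, g). g(Suc N := y)) (B (Suc N) \<times> PiE {0..N} B)"
      using inj_combinator[of "Suc N" "{0..N}" B] by simp
    then show ?thesis by (simp add: sum.reindex case_prod_unfold)
  qed
  also have "\<dots> = (\<Sum>w\<in>PiE {0..N} B. \<Sum>x\<in>B (Suc N). f (w(Suc N := x)))"
    by (simp add: sum.cartesian_product[symmetric] sum.swap[of _ "B (Suc N)"])
  finally show ?thesis .
qed

lemma sum_PiE_0:
  "(\<Sum>w\<in>PiE {0..0::nat} B. f w) = (\<Sum>x\<in>B 0. f ((\<lambda>_. undefined)(0 := x)))"
proof -
  have "(\<Sum>w\<in>PiE {0..0::nat} B. f w) = (\<Sum>w\<in>(\<lambda>(y, g). g(0 := y)) ` (B 0 \<times> PiE {} B). f w)"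
    by (simp only: atLeastAtMost_singleton PiE_insert_eq)
  also have "\<dots> = (\<Sum>(y, g)\<in>B 0 \<times> PiE {} B. f (g(0 := y)))"
  proof -
    have "inj_on (\<lambda>(y, g). g(0 := y)) (B 0 \<times> PiE {} B)"
      using inj_combinator[of 0 "{}" B] by simp
    then show ?thesis by (simp add: sum.reindex case_prod_unfold)
  qed
  also have "\<dots> = (\<Sum>x\<in>B 0. f ((\<lambda>_. undefined)(0 := x)))"
    by (simp add: sum.cartesian_product[symmetric] fun_upd_def)
  finally show ?thesis .
qed

lemma sum_pm1: "(\<Sum>y\<in>{-1, 1::real}. f y) = f (-1) + f 1"
  by simp

lemma PiE_pm1_value:
  "w \<in> PiE {0..N::nat} (\<lambda>_. {-1, 1::real}) \<Longrightarrow> i \<le> N \<Longrightarrow> w i = -1 \<or> w i = 1"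
  by (auto simp: PiE_iff)

text \<open>The t-step transition probabilities of the chain with flip probability 1 - epsilon.\<close>
definition trans_prob :: "real \<Rightarrow> nat \<Rightarrow> real \<Rightarrow> real \<Rightarrow> real" where
  "trans_prob \<epsilon> t x y = (1 + x * y * (2 * \<epsilon> - 1) ^ t) / 2"

lemma trans_prob_one:
  "x \<in> {-1, 1} \<Longrightarrow> y \<in> {-1, 1} \<Longrightarrow> (if y = x then \<epsilon> else 1 - \<epsilon>) = trans_prob \<epsilon> 1 x y"
  unfolding trans_prob_def by auto

lemma trans_prob_zero:
  "x \<in> {-1, 1} \<Longrightarrow> (\<Sum>y\<in>{-1, 1}. trans_prob \<epsilon> 0 x y * \<phi> y) = \<phi> x"
  unfolding trans_prob_def sum_pm1 by auto

lemma chapman_kolmogorov: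
  "x \<in> {-1, 1} \<Longrightarrow>
    (\<Sum>y\<in>{-1, 1}. trans_prob \<epsilon> t x y * (\<Sum>z\<in>{-1, 1}. trans_prob \<epsilon> 1 y z * \<phi> z))
    = (\<Sum>z\<in>{-1, 1}. trans_prob \<epsilon> (Suc t) x z * \<phi> z)"
  unfolding trans_prob_def sum_pm1 by (auto simp: algebra_simps divide_simps)

lemma trans_prob_nonneg:
  assumes "0 \<le> \<epsilon>" "\<epsilon> \<le> 1" "x \<in> {-1, 1}" "y \<in> {-1, 1}"
  shows "0 \<le> trans_prob \<epsilon> t x y"
proof -
  have "\<bar>(2 * \<epsilon> - 1) ^ t\<bar> \<le> 1"
    using assms(1,2) by (simp add: power_abs power_le_one)
  then show ?thesis using assms(3,4) unfolding trans_prob_def by auto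
qed

lemma trans_prob_sum: "y \<in> {-1, 1} \<Longrightarrow> (\<Sum>x\<in>{-1, 1}. trans_prob \<epsilon> t x y) = 1"
  unfolding trans_prob_def by (auto simp: field_simps)

lemma mc_prob_extend:
  "mc_prob \<epsilon> (Suc N) (w(Suc N := x)) = mc_prob \<epsilon> N w * (if x = w N then \<epsilon> else 1 - \<epsilon>)"
proof -
  have "(\<Prod>n\<in>{1..N}. if (w(Suc N := x)) n = (w(Suc N := x)) (n - 1) then \<epsilon> else 1 - \<epsilon>)
      = (\<Prod>n\<in>{1..N}. if w n = w (n - 1) then \<epsilon> else 1 - \<epsilon>)"
    by (rule prod.cong) auto
  then show ?thesis unfolding mc_prob_def by (simp add: prod.cl_ivl_Suc)
qed

lemma mc_sum_last:
  assumes G: "\<And>w x. G (w(Suc n := x)) = G w"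
  shows "(\<Sum>w\<in>PiE {0..Suc n} (\<lambda>_. {-1, 1}). mc_prob \<epsilon> (Suc n) w * G w * \<phi> (w (Suc n)))
       = (\<Sum>w\<in>PiE {0..n} (\<lambda>_. {-1, 1}).
            mc_prob \<epsilon> n w * G w * (\<Sum>x\<in>{-1, 1}. trans_prob \<epsilon> 1 (w n) x * \<phi> x))"
proof -
  have "(\<Sum>x\<in>{-1, 1}. mc_prob \<epsilon> (Suc n) (w(Suc n := x)) * G (w(Suc n := x)) * \<phi> x)
      = mc_prob \<epsilon> n w * G w * (\<Sum>x\<in>{-1, 1}. trans_prob \<epsilon> 1 (w n) x * \<phi> x)"
    if "w \<in> PiE {0..n} (\<lambda>_. {-1, 1})" for w
  proof -
    have wn: "w n \<in> {-1, 1}" using PiE_pm1_value[OF that] by auto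
    show ?thesis
      using trans_prob_one[OF wn, of "-1" \<epsilon>] trans_prob_one[OF wn, of 1 \<epsilon>]
      unfolding sum_pm1 mc_prob_extend G by (simp add: algebra_simps)
  qed
  then show ?thesis by (simp add: sum_PiE_Suc)
qed

lemma mc_marginal:
  assumes "m \<le> N" and G: "\<And>w w'. (\<forall>i\<le>m. w i = w' i) \<Longrightarrow> G w = G w'"
  shows "(\<Sum>w\<in>PiE {0..N} (\<lambda>_. {-1, 1}). mc_prob \<epsilon> N w * G w * \<phi> (w N))
       = (\<Sum>w\<in>PiE {0..m} (\<lambda>_. {-1, 1}).
            mc_prob \<epsilon> m w * G w * (\<Sum>y\<in>{-1, 1}. trans_prob \<epsilon> (N - m) (w m) y * \<phi> y))"
proof -
  obtain d where N: "N = m + d" using assms(1) le_Suc_ex by blast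
  have "(\<Sum>w\<in>PiE {0..m + d} (\<lambda>_. {-1, 1}). mc_prob \<epsilon> (m + d) w * G w * \<phi> (w (m + d)))
       = (\<Sum>w\<in>PiE {0..m} (\<lambda>_. {-1, 1}).
            mc_prob \<epsilon> m w * G w * (\<Sum>y\<in>{-1, 1}. trans_prob \<epsilon> d (w m) y * \<phi> y))"
  proof (induction d arbitrary: \<phi>)
    case 0
    show ?case
      by (rule sum.cong) (use PiE_pm1_value trans_prob_zero in auto)
  next
    case (Suc d)
    have G_upd: "G (w(Suc (m + d) := x)) = G w" for w x by (rule G) auto
    have "(\<Sum>w\<in>PiE {0..m + Suc d} (\<lambda>_. {-1, 1}). mc_prob \<epsilon> (m + Suc d) w * G w * \<phi> (w (m + Suc d)))
      = (\<Sum>w\<in>PiE {0..m + d} (\<lambda>_. {-1, 1}). mc_prob \<epsilon> (m + d) w * G w *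
          (\<Sum>x\<in>{-1, 1}. trans_prob \<epsilon> 1 (w (m + d)) x * \<phi> x))"
      using mc_sum_last[of G "m + d", OF G_upd] by simp
    also have "\<dots> = (\<Sum>w\<in>PiE {0..m} (\<lambda>_. {-1, 1}). mc_prob \<epsilon> m w * G w *
          (\<Sum>y\<in>{-1, 1}. trans_prob \<epsilon> d (w m) y * (\<Sum>x\<in>{-1, 1}. trans_prob \<epsilon> 1 y x * \<phi> x)))"
      by (rule Suc.IH)
    also have "\<dots> = (\<Sum>w\<in>PiE {0..m} (\<lambda>_. {-1, 1}). mc_prob \<epsilon> m w * G w *
          (\<Sum>y\<in>{-1, 1}. trans_prob \<epsilon> (Suc d) (w m) y * \<phi> y))"
      by (rule sum.cong) (use PiE_pm1_value chapman_kolmogorov in auto)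
    finally show ?case .
  qed
  then show ?thesis using N by simp
qed

section \<open>Decomposition at the last renewal point\<close>

definition ending_at :: "nat \<Rightarrow> nat set set" where
  "ending_at N = {S. S \<subseteq> {1..N} \<and> N \<in> S}"

definition Zann_conf ::
    "(nat \<Rightarrow> real) \<Rightarrow> real \<Rightarrow> real \<Rightarrow> real \<Rightarrow> nat \<Rightarrow> nat set \<Rightarrow> real \<Rightarrow> real" where
  "Zann_conf K \<epsilon> \<beta> h N S \<sigma> = (\<Sum>w\<in>PiE {0..N} (\<lambda>_. {-1, 1}). mc_prob \<epsilon> N w *
      (renewal_weight K S * exp (\<Sum>n\<in>S. \<beta> * w n + h)) * (if w N = \<sigma> then 1 else 0))"

definition Zann_at :: "(nat \<Rightarrow> real) \<Rightarrow> real \<Rightarrow> real \<Rightarrow> real \<Rightarrow> nat \<Rightarrow> real \<Rightarrow> real" where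
  "Zann_at K \<epsilon> \<beta> h N \<sigma> = (\<Sum>S\<in>ending_at N. Zann_conf K \<epsilon> \<beta> h N S \<sigma>)"

lemma finite_ending_at: "finite (ending_at N)"
  unfolding ending_at_def by (rule finite_subset[of _ "Pow {1..N}"]) auto

lemma Max_ending_at: "S \<in> ending_at N \<Longrightarrow> Max (insert 0 S) = N"
  unfolding ending_at_def by (intro Max_eqI) (auto intro: finite_subset)

lemma ending_at_insert:
  assumes "N \<ge> 1"
  shows "ending_at N = insert N ` Pow {1..<N}"
proof
  show "ending_at N \<subseteq> insert N ` Pow {1..<N}"
  proof
    fix S assume "S \<in> ending_at N"
    then have "S = insert N (S - {N})" "S - {N} \<in> Pow {1..<N}"
      unfolding ending_at_def by auto
    then show "S \<in> insert N ` Pow {1..<N}" by blast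
  qed
  show "insert N ` Pow {1..<N} \<subseteq> ending_at N"
    using assms unfolding ending_at_def by auto
qed

lemma inj_on_insert_Pow: "inj_on (insert N) (Pow {1..<N::nat})"
proof (rule inj_onI)
  fix A B assume A: "A \<in> Pow {1..<N}" and B: "B \<in> Pow {1..<N}" and eq: "insert N A = insert N B"
  from A B have "N \<notin> A" "N \<notin> B" by auto
  with eq show "A = B" by (metis insert_ident)
qed

lemma sum_Pow_by_max:
  "(\<Sum>S\<in>Pow {1..<n}. F S) = F {} + (\<Sum>m\<in>{1..<n}. \<Sum>S\<in>ending_at m. F S)"
proof (induction n)
  case 0
  then show ?case by simp
next
  case (Suc n)
  have split: "Pow {1..<Suc n} = Pow {1..<n} \<union> ending_at n"
    unfolding ending_at_def by (auto simp: subset_iff less_Suc_eq_le le_less)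
  have disjoint: "Pow {1..<n} \<inter> ending_at n = {}"
    unfolding ending_at_def by auto
  have "(\<Sum>S\<in>Pow {1..<Suc n}. F S) = (\<Sum>S\<in>Pow {1..<n}. F S) + (\<Sum>S\<in>ending_at n. F S)"
    unfolding split by (rule sum.union_disjoint[OF _ _ disjoint]) (simp_all add: finite_ending_at)
  moreover have "ending_at 0 = {}"
    unfolding ending_at_def by auto
  ultimately show ?case
    using Suc.IH by (cases "n = 0") (simp_all add: sum.atLeastLessThan_Suc add.assoc)
qed

lemma Zann_split: "Zann K \<epsilon> N \<beta> h = Zann_at K \<epsilon> \<beta> h N 1 + Zann_at K \<epsilon> \<beta> h N (-1)"
proof -
  let ?f = "\<lambda>w S. mc_prob \<epsilon> N w * (renewal_weight K S * exp (\<Sum>n\<in>S. \<beta> * w n + h))"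
  let ?ind = "\<lambda>w \<sigma>. if w N = \<sigma> then 1 else (0::real)"
  have "Zann K \<epsilon> N \<beta> h = (\<Sum>w\<in>PiE {0..N} (\<lambda>_. {-1, 1}). \<Sum>S\<in>ending_at N. ?f w S)"
    unfolding Zann_def Zq_def ending_at_def by (simp add: sum_distrib_left)
  also have "\<dots> = (\<Sum>w\<in>PiE {0..N} (\<lambda>_. {-1, 1}). \<Sum>S\<in>ending_at N.
      ?f w S * ?ind w 1 + ?f w S * ?ind w (-1))"
    by (rule sum.cong) (use PiE_pm1_value in auto)
  also have "\<dots> = (\<Sum>S\<in>ending_at N. \<Sum>w\<in>PiE {0..N} (\<lambda>_. {-1, 1}).
      ?f w S * ?ind w 1 + ?f w S * ?ind w (-1))"
    by (rule sum.swap)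
  also have "\<dots> = Zann_at K \<epsilon> \<beta> h N 1 + Zann_at K \<epsilon> \<beta> h N (-1)"
    unfolding Zann_at_def Zann_conf_def sum.distrib ..
  finally show ?thesis .
qed

lemma renewal_weight_insert:
  assumes "S0 \<subseteq> {1..<N}"
  shows "renewal_weight K (insert N S0) = K (N - Max (insert 0 S0)) * renewal_weight K S0"
proof -
  have fin: "finite S0" using assms finite_subset by blast
  have "N \<notin> S0" using assms by auto
  moreover have "{t \<in> insert N S0. t < N} = S0" using assms by auto
  moreover have "{t \<in> insert N S0. t < s} = {t \<in> S0. t < s}" if "s \<in> S0" for s
    using assms that by auto
  ultimately show ?thesis
    unfolding renewal_weight_def using fin by (simp cong: prod.cong)
qed

lemma Zann_conf_by_last_state:
  "(\<Sum>w\<in>PiE {0..m} (\<lambda>_. {-1, 1}). mc_prob \<epsilon> m w *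
      (renewal_weight K S * exp (\<Sum>n\<in>S. \<beta> * w n + h)) * trans_prob \<epsilon> t (w m) \<sigma>)
   = (\<Sum>\<tau>\<in>{-1, 1}. trans_prob \<epsilon> t \<tau> \<sigma> * Zann_conf K \<epsilon> \<beta> h m S \<tau>)"
proof -
  let ?G = "\<lambda>w. mc_prob \<epsilon> m w * (renewal_weight K S * exp (\<Sum>n\<in>S. \<beta> * w n + h))"
  have "(\<Sum>w\<in>PiE {0..m} (\<lambda>_. {-1, 1}). ?G w * trans_prob \<epsilon> t (w m) \<sigma>)
     = (\<Sum>w\<in>PiE {0..m} (\<lambda>_. {-1, 1}). \<Sum>\<tau>\<in>{-1, 1}.
          trans_prob \<epsilon> t \<tau> \<sigma> * (?G w * (if w m = \<tau> then 1 else 0)))"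
    by (rule sum.cong) (use PiE_pm1_value in auto)
  also have "\<dots> = (\<Sum>\<tau>\<in>{-1, 1}. \<Sum>w\<in>PiE {0..m} (\<lambda>_. {-1, 1}).
          trans_prob \<epsilon> t \<tau> \<sigma> * (?G w * (if w m = \<tau> then 1 else 0)))"
    by (rule sum.swap)
  also have "\<dots> = (\<Sum>\<tau>\<in>{-1, 1}. trans_prob \<epsilon> t \<tau> \<sigma> * Zann_conf K \<epsilon> \<beta> h m S \<tau>)"
    unfolding Zann_conf_def sum_distrib_left by (simp only: mult.assoc)
  finally show ?thesis .
qed

text \<open>Adding the point N after the last point m of S0: the renewal weight gains the factor
  K (N - m), the energy gains the term at N, and by the Markov property the disorder only
  enters through the (N - m)-step transition from the state at time m to the state at N.\<close>
lemma Zann_conf_insert: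
  assumes S0: "S0 \<subseteq> {1..<N}" and \<sigma>: "\<sigma> \<in> {-1, 1}"
  defines "m \<equiv> Max (insert 0 S0)"
  shows "Zann_conf K \<epsilon> \<beta> h N (insert N S0) \<sigma> = exp (\<beta> * \<sigma> + h) * K (N - m) *
     (\<Sum>\<tau>\<in>{-1, 1}. trans_prob \<epsilon> (N - m) \<tau> \<sigma> * Zann_conf K \<epsilon> \<beta> h m S0 \<tau>)"
proof -
  have fin: "finite S0" using S0 finite_subset by blast
  have "N \<notin> S0" using S0 by auto
  have mN: "m \<le> N" unfolding m_def using fin S0 by (subst Max_le_iff) auto
  have Sm: "S0 \<subseteq> {1..m}" unfolding m_def using fin S0 by auto
  let ?G = "\<lambda>w. renewal_weight K S0 * exp (\<Sum>n\<in>S0. \<beta> * w n + h)"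
  let ?c = "exp (\<beta> * \<sigma> + h) * K (N - m)"
  have "Zann_conf K \<epsilon> \<beta> h N (insert N S0) \<sigma> = (\<Sum>w\<in>PiE {0..N} (\<lambda>_. {-1, 1}).
      mc_prob \<epsilon> N w * ?G w * (?c * (if w N = \<sigma> then 1 else 0)))"
    unfolding Zann_conf_def renewal_weight_insert[OF S0] m_def[symmetric]
    using fin \<open>N \<notin> S0\<close> by (intro sum.cong) (auto simp: exp_add)
  also have "\<dots> = (\<Sum>w\<in>PiE {0..m} (\<lambda>_. {-1, 1}). mc_prob \<epsilon> m w * ?G w *
      (\<Sum>y\<in>{-1, 1}. trans_prob \<epsilon> (N - m) (w m) y * (?c * (if y = \<sigma> then 1 else 0))))"
  proof (rule mc_marginal[OF mN])
    fix w w' :: "nat \<Rightarrow> real" assume "\<forall>i\<le>m. w i = w' i"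
    then have "\<forall>n\<in>S0. w n = w' n" using Sm by auto
    then show "?G w = ?G w'" by (simp cong: sum.cong)
  qed
  also have "\<dots> = ?c * (\<Sum>w\<in>PiE {0..m} (\<lambda>_. {-1, 1}).
      mc_prob \<epsilon> m w * ?G w * trans_prob \<epsilon> (N - m) (w m) \<sigma>)"
    using \<sigma> by (auto simp: sum_distrib_left mult_ac intro!: sum.cong)
  finally show ?thesis
    unfolding Zann_conf_by_last_state by (simp only: mult.assoc)
qed

text \<open>The empty configuration at time 0 carries the invariant law.\<close>
lemma Zann_conf_empty: "Zann_conf K \<epsilon> \<beta> h 0 {} \<tau> = (if \<tau> \<in> {-1, 1} then 1 / 2 else 0)"
  unfolding Zann_conf_def by (subst sum_PiE_0) (auto simp: renewal_weight_def mc_prob_def)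

lemma Zann_at_last_point:
  assumes N: "N \<ge> 1" and \<sigma>: "\<sigma> \<in> {-1, 1}"
  shows "Zann_at K \<epsilon> \<beta> h N \<sigma> = exp (\<beta> * \<sigma> + h) * (K N / 2 +
     (\<Sum>m\<in>{1..<N}. K (N - m) * (\<Sum>\<tau>\<in>{-1, 1}. trans_prob \<epsilon> (N - m) \<tau> \<sigma> * Zann_at K \<epsilon> \<beta> h m \<tau>)))"
proof -
  define \<Phi> where "\<Phi> S0 = exp (\<beta> * \<sigma> + h) * K (N - Max (insert 0 S0)) * (\<Sum>\<tau>\<in>{-1, 1}.
    trans_prob \<epsilon> (N - Max (insert 0 S0)) \<tau> \<sigma> * Zann_conf K \<epsilon> \<beta> h (Max (insert 0 S0)) S0 \<tau>)"
    for S0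
  have "Zann_at K \<epsilon> \<beta> h N \<sigma> = (\<Sum>S0\<in>Pow {1..<N}. Zann_conf K \<epsilon> \<beta> h N (insert N S0) \<sigma>)"
    unfolding Zann_at_def ending_at_insert[OF N] by (rule sum.reindex[OF inj_on_insert_Pow, unfolded comp_def])
  also have "\<dots> = (\<Sum>S0\<in>Pow {1..<N}. \<Phi> S0)"
    unfolding \<Phi>_def using \<sigma> by (intro sum.cong Zann_conf_insert) auto
  also have "\<dots> = \<Phi> {} + (\<Sum>m\<in>{1..<N}. \<Sum>S\<in>ending_at m. \<Phi> S)"
    by (rule sum_Pow_by_max)
  also have "\<Phi> {} = exp (\<beta> * \<sigma> + h) * (K N / 2)"
    unfolding \<Phi>_def using trans_prob_sum[OF \<sigma>, of \<epsilon> N]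
    by (simp add: Zann_conf_empty sum_pm1)
  also have "(\<Sum>m\<in>{1..<N}. \<Sum>S\<in>ending_at m. \<Phi> S) = (\<Sum>m\<in>{1..<N}. exp (\<beta> * \<sigma> + h) *
      (K (N - m) * (\<Sum>\<tau>\<in>{-1, 1}. trans_prob \<epsilon> (N - m) \<tau> \<sigma> * Zann_at K \<epsilon> \<beta> h m \<tau>)))"
    unfolding \<Phi>_def Zann_at_def sum_pm1
    by (simp add: Max_ending_at sum_distrib_left sum.distrib algebra_simps cong: sum.cong)
  finally show ?thesis by (simp only: distrib_left sum_distrib_left)
qed

lemma Zann_at_renewal_eq:
  assumes N: "N \<ge> 1" and \<sigma>: "\<sigma> \<in> {-1, 1}"
  shows "Zann_at K \<epsilon> \<beta> h N \<sigma> = exp (\<beta> * \<sigma> + h) * (K N / 2 +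
     (\<Sum>t\<in>{1..<N}. K t * (\<Sum>\<tau>\<in>{-1, 1}. trans_prob \<epsilon> t \<tau> \<sigma> * Zann_at K \<epsilon> \<beta> h (N - t) \<tau>)))"
proof -
  have "(\<Sum>m\<in>{1..<N}. K (N - m) * (\<Sum>\<tau>\<in>{-1, 1}. trans_prob \<epsilon> (N - m) \<tau> \<sigma> * Zann_at K \<epsilon> \<beta> h m \<tau>))
      = (\<Sum>t\<in>{1..<N}. K t * (\<Sum>\<tau>\<in>{-1, 1}. trans_prob \<epsilon> t \<tau> \<sigma> * Zann_at K \<epsilon> \<beta> h (N - t) \<tau>))"
    by (rule sum.reindex_bij_witness[of _ "\<lambda>t. N - t" "\<lambda>m. N - m"]) auto
  then show ?thesis using Zann_at_last_point[OF N \<sigma>] by simp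
qed

section \<open>Multitype renewal equations\<close>

text \<open>Abstract multitype renewal equations over a finite set X of states.  The source term
  mu K N corresponds to a renewal epoch at N without earlier epochs.\<close>
locale renewal_system =
  fixes X :: "'a set" and W :: "nat \<Rightarrow> 'a \<Rightarrow> real" and E :: "'a \<Rightarrow> real"
    and K :: "nat \<Rightarrow> real" and P :: "nat \<Rightarrow> 'a \<Rightarrow> 'a \<Rightarrow> real" and \<mu> :: real
  assumes finite_states: "finite X"
    and renewal: "\<And>N \<sigma>. N \<ge> 1 \<Longrightarrow> \<sigma> \<in> X \<Longrightarrow>
      W N \<sigma> = E \<sigma> * (\<mu> * K N + (\<Sum>t\<in>{1..<N}. K t * (\<Sum>\<tau>\<in>X. P t \<tau> \<sigma> * W (N - t) \<tau>)))"
    and E_pos: "\<And>\<sigma>. \<sigma> \<in> X \<Longrightarrow> E \<sigma> > 0"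
    and K_pos: "\<And>t. t \<ge> 1 \<Longrightarrow> K t > 0"
    and \<mu>_pos: "\<mu> > 0"
    and P_nonneg: "\<And>t \<tau> \<sigma>. \<tau> \<in> X \<Longrightarrow> \<sigma> \<in> X \<Longrightarrow> P t \<tau> \<sigma> \<ge> 0"
    and P_sum: "\<And>t \<sigma>. \<sigma> \<in> X \<Longrightarrow> (\<Sum>\<tau>\<in>X. P t \<tau> \<sigma>) = 1"
begin

definition kernel_sum :: "nat \<Rightarrow> ('a \<Rightarrow> real) \<Rightarrow> 'a \<Rightarrow> real" where
  "kernel_sum n c \<sigma> = (\<Sum>t\<in>{1..n}. E \<sigma> * K t * (\<Sum>\<tau>\<in>X. P t \<tau> \<sigma> * c \<tau>))"

lemma kernel_sum_eq:
  "E \<sigma> * (\<Sum>t\<in>A. K t * (\<Sum>\<tau>\<in>X. P t \<tau> \<sigma> * (C * c \<tau>)))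
    = C * (\<Sum>t\<in>A. E \<sigma> * K t * (\<Sum>\<tau>\<in>X. P t \<tau> \<sigma> * c \<tau>))"
  by (simp add: sum_distrib_left algebra_simps)

lemma W_pos: "N \<ge> 1 \<Longrightarrow> \<sigma> \<in> X \<Longrightarrow> W N \<sigma> > 0"
proof (induction N arbitrary: \<sigma> rule: less_induct)
  case (less N)
  have "0 \<le> K t * (\<Sum>\<tau>\<in>X. P t \<tau> \<sigma> * W (N - t) \<tau>)" if t: "t \<in> {1..<N}" for t
  proof -
    have "0 \<le> P t \<tau> \<sigma> * W (N - t) \<tau>" if \<tau>: "\<tau> \<in> X" for \<tau>
    proof -
      have "W (N - t) \<tau> > 0" using less.IH[of "N - t" \<tau>] t \<tau> by auto
      then show ?thesis using P_nonneg[OF \<tau> less.prems(2)] by simp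
    qed
    then show ?thesis using K_pos[of t] t by (simp add: sum_nonneg)
  qed
  then have "0 \<le> (\<Sum>t\<in>{1..<N}. K t * (\<Sum>\<tau>\<in>X. P t \<tau> \<sigma> * W (N - t) \<tau>))"
    by (rule sum_nonneg)
  moreover have "\<mu> * K N > 0" using K_pos less.prems \<mu>_pos by simp
  ultimately show ?case
    using renewal[OF less.prems] E_pos[OF less.prems(2)] by simp
qed

lemma W_upper:
  assumes c_pos: "\<And>\<tau>. \<tau> \<in> X \<Longrightarrow> c \<tau> > 0"
    and C: "C \<ge> 0" "\<And>\<tau>. \<tau> \<in> X \<Longrightarrow> C * c \<tau> \<ge> \<mu>"
    and superharmonic: "\<And>n \<sigma>. \<sigma> \<in> X \<Longrightarrow> kernel_sum n c \<sigma> \<le> c \<sigma>"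
  shows "N \<ge> 1 \<Longrightarrow> \<sigma> \<in> X \<Longrightarrow> W N \<sigma> \<le> C * c \<sigma>"
proof (induction N arbitrary: \<sigma> rule: less_induct)
  case (less N)
  let ?g = "\<lambda>t. K t * (\<Sum>\<tau>\<in>X. P t \<tau> \<sigma> * (C * c \<tau>))"
  have source: "\<mu> * K N \<le> ?g N"
  proof -
    have "\<mu> = (\<Sum>\<tau>\<in>X. P N \<tau> \<sigma> * \<mu>)"
      using P_sum[OF less.prems(2)] by (simp add: sum_distrib_right[symmetric])
    also have "\<dots> \<le> (\<Sum>\<tau>\<in>X. P N \<tau> \<sigma> * (C * c \<tau>))"
      using C(2) P_nonneg less.prems(2) by (intro sum_mono mult_left_mono) auto
    finally show ?thesis using K_pos[of N] less.prems(1) by (simp add: mult.commute)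
  qed
  have earlier: "(\<Sum>t\<in>{1..<N}. K t * (\<Sum>\<tau>\<in>X. P t \<tau> \<sigma> * W (N - t) \<tau>)) \<le> (\<Sum>t\<in>{1..<N}. ?g t)"
  proof (rule sum_mono)
    fix t assume t: "t \<in> {1..<N}"
    have "P t \<tau> \<sigma> * W (N - t) \<tau> \<le> P t \<tau> \<sigma> * (C * c \<tau>)" if \<tau>: "\<tau> \<in> X" for \<tau>
    proof -
      have "W (N - t) \<tau> \<le> C * c \<tau>" using less.IH[of "N - t" \<tau>] t \<tau> by auto
      then show ?thesis using P_nonneg[OF \<tau> less.prems(2)] by (rule mult_left_mono)
    qed
    then have "(\<Sum>\<tau>\<in>X. P t \<tau> \<sigma> * W (N - t) \<tau>) \<le> (\<Sum>\<tau>\<in>X. P t \<tau> \<sigma> * (C * c \<tau>))"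
      by (rule sum_mono)
    then show "K t * (\<Sum>\<tau>\<in>X. P t \<tau> \<sigma> * W (N - t) \<tau>) \<le> ?g t"
      using K_pos[of t] t by (simp add: mult_left_mono)
  qed
  have "W N \<sigma> \<le> E \<sigma> * (\<Sum>t\<in>{1..N}. ?g t)"
  proof -
    have "{1..N} = insert N {1..<N}" using less.prems(1) by auto
    then have "(\<Sum>t\<in>{1..N}. ?g t) = ?g N + (\<Sum>t\<in>{1..<N}. ?g t)" by simp
    then show ?thesis
      unfolding renewal[OF less.prems] using source earlier E_pos[OF less.prems(2)]
      by (intro mult_left_mono) auto
  qed
  also have "\<dots> = C * kernel_sum N c \<sigma>"
    unfolding kernel_sum_def kernel_sum_eq ..
  also have "\<dots> \<le> C * c \<sigma>"
    using superharmonic[OF less.prems(2)] C(1) by (rule mult_left_mono)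
  finally show ?case .
qed

lemma W_lower_initial:
  assumes c_pos: "\<And>\<tau>. \<tau> \<in> X \<Longrightarrow> c \<tau> > 0" and \<gamma>: "\<gamma> > 0"
  shows "\<exists>\<kappa>>0. \<forall>N\<in>{1..T}. \<forall>\<sigma>\<in>X. \<kappa> * \<gamma> ^ N * c \<sigma> \<le> W N \<sigma>"
proof -
  define R where "R = (\<lambda>(N, \<sigma>). W N \<sigma> / (\<gamma> ^ N * c \<sigma>)) ` ({1..T} \<times> X)"
  define \<kappa> where "\<kappa> = Min (insert 1 R)"
  have fin: "finite (insert 1 R)" unfolding R_def using finite_states by simp
  have "\<forall>a\<in>R. 0 < a" unfolding R_def using W_pos c_pos \<gamma> by auto
  then have "\<kappa> > 0" unfolding \<kappa>_def using fin by simp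
  moreover have "\<kappa> * \<gamma> ^ N * c \<sigma> \<le> W N \<sigma>" if "N \<in> {1..T}" "\<sigma> \<in> X" for N \<sigma>
  proof -
    have "W N \<sigma> / (\<gamma> ^ N * c \<sigma>) \<in> R" unfolding R_def using that by force
    then have "\<kappa> \<le> W N \<sigma> / (\<gamma> ^ N * c \<sigma>)" unfolding \<kappa>_def using fin by simp
    moreover have "\<gamma> ^ N * c \<sigma> > 0" using c_pos that \<gamma> by simp
    ultimately show ?thesis by (simp add: pos_le_divide_eq mult.assoc)
  qed
  ultimately show ?thesis by blast
qed

lemma renewal_truncated:
  assumes N: "T < N" and \<sigma>: "\<sigma> \<in> X"
  shows "E \<sigma> * (\<Sum>t\<in>{1..T}. K t * (\<Sum>\<tau>\<in>X. P t \<tau> \<sigma> * W (N - t) \<tau>)) \<le> W N \<sigma>"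
proof -
  have terms_nonneg: "0 \<le> K t * (\<Sum>\<tau>\<in>X. P t \<tau> \<sigma> * W (N - t) \<tau>)" if t: "t \<in> {1..<N}" for t
  proof -
    have "0 \<le> P t \<tau> \<sigma> * W (N - t) \<tau>" if \<tau>: "\<tau> \<in> X" for \<tau>
    proof -
      have "1 \<le> N - t" using t by (simp add: Suc_le_eq)
      then show ?thesis using P_nonneg[OF \<tau> \<sigma>] W_pos[of "N - t" \<tau>] \<tau> by simp
    qed
    then show ?thesis using K_pos[of t] t by (simp add: sum_nonneg)
  qed
  have "E \<sigma> * (\<Sum>t\<in>{1..T}. K t * (\<Sum>\<tau>\<in>X. P t \<tau> \<sigma> * W (N - t) \<tau>))
      \<le> E \<sigma> * (\<Sum>t\<in>{1..<N}. K t * (\<Sum>\<tau>\<in>X. P t \<tau> \<sigma> * W (N - t) \<tau>))"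
    using N terms_nonneg E_pos[OF \<sigma>] by (intro mult_left_mono sum_mono2) auto
  also have "\<dots> \<le> W N \<sigma>"
  proof -
    have N1: "N \<ge> 1" using N by simp
    then show ?thesis
      unfolding renewal[OF N1 \<sigma>] using K_pos[OF N1] \<mu>_pos E_pos[OF \<sigma>] by (intro mult_left_mono) auto
  qed
  finally show ?thesis .
qed

lemma W_lower_step:
  assumes c_pos: "\<And>\<tau>. \<tau> \<in> X \<Longrightarrow> c \<tau> > 0"
    and q: "q > 0" and \<gamma>: "\<gamma> > 0" and \<gamma>_q: "\<And>t. t \<in> {1..T} \<Longrightarrow> \<gamma> ^ t \<le> q"
    and subharmonic: "q * c \<sigma> \<le> kernel_sum T c \<sigma>"
    and \<kappa>: "\<kappa> \<ge> 0" and N: "T < N" and \<sigma>: "\<sigma> \<in> X"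
    and earlier: "\<And>M \<tau>. 1 \<le> M \<Longrightarrow> M < N \<Longrightarrow> \<tau> \<in> X \<Longrightarrow> \<kappa> * \<gamma> ^ M * c \<tau> \<le> W M \<tau>"
  shows "\<kappa> * \<gamma> ^ N * c \<sigma> \<le> W N \<sigma>"
proof -
  define a where "a = \<kappa> * \<gamma> ^ N / q"
  have a: "a \<ge> 0" unfolding a_def using \<kappa> \<gamma> q by simp
  have step: "P t \<tau> \<sigma> * (a * c \<tau>) \<le> P t \<tau> \<sigma> * W (N - t) \<tau>" if t: "t \<in> {1..T}" and \<tau>: "\<tau> \<in> X" for t \<tau>
  proof -
    have "\<gamma> ^ N = \<gamma> ^ (N - t) * \<gamma> ^ t" using t N by (simp add: power_add[symmetric])
    also have "\<dots> \<le> \<gamma> ^ (N - t) * q" using \<gamma>_q[OF t] \<gamma> by (simp add: mult_left_mono)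
    finally have "a \<le> \<kappa> * \<gamma> ^ (N - t)"
      unfolding a_def using \<kappa> q by (simp add: divide_le_eq mult_left_mono mult.assoc)
    then have "a * c \<tau> \<le> \<kappa> * \<gamma> ^ (N - t) * c \<tau>"
      using c_pos[OF \<tau>] by (simp add: mult_right_mono)
    also have "\<dots> \<le> W (N - t) \<tau>" using earlier[of "N - t" \<tau>] t N \<tau> by auto
    finally show ?thesis using P_nonneg[OF \<tau> \<sigma>] by (rule mult_left_mono)
  qed
  have "\<kappa> * \<gamma> ^ N * c \<sigma> = a * (q * c \<sigma>)" unfolding a_def using q by simp
  also have "\<dots> \<le> a * kernel_sum T c \<sigma>"
    using subharmonic a by (rule mult_left_mono)
  also have "\<dots> = E \<sigma> * (\<Sum>t\<in>{1..T}. K t * (\<Sum>\<tau>\<in>X. P t \<tau> \<sigma> * (a * c \<tau>)))"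
    unfolding kernel_sum_def kernel_sum_eq ..
  also have "\<dots> \<le> E \<sigma> * (\<Sum>t\<in>{1..T}. K t * (\<Sum>\<tau>\<in>X. P t \<tau> \<sigma> * W (N - t) \<tau>))"
  proof -
    have "K t * (\<Sum>\<tau>\<in>X. P t \<tau> \<sigma> * (a * c \<tau>)) \<le> K t * (\<Sum>\<tau>\<in>X. P t \<tau> \<sigma> * W (N - t) \<tau>)"
      if t: "t \<in> {1..T}" for t
    proof -
      have "(\<Sum>\<tau>\<in>X. P t \<tau> \<sigma> * (a * c \<tau>)) \<le> (\<Sum>\<tau>\<in>X. P t \<tau> \<sigma> * W (N - t) \<tau>)"
        using step[OF t] by (rule sum_mono)
      then show ?thesis using K_pos[of t] t by (simp add: mult_left_mono)
    qed
    then have "(\<Sum>t\<in>{1..T}. K t * (\<Sum>\<tau>\<in>X. P t \<tau> \<sigma> * (a * c \<tau>)))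
        \<le> (\<Sum>t\<in>{1..T}. K t * (\<Sum>\<tau>\<in>X. P t \<tau> \<sigma> * W (N - t) \<tau>))"
      by (rule sum_mono)
    then show ?thesis using E_pos[OF \<sigma>] by (simp add: mult_left_mono)
  qed
  also have "\<dots> \<le> W N \<sigma>" by (rule renewal_truncated[OF N \<sigma>])
  finally show ?thesis .
qed

lemma W_lower:
  assumes c_pos: "\<And>\<tau>. \<tau> \<in> X \<Longrightarrow> c \<tau> > 0"
    and q: "q > 0" and \<gamma>: "\<gamma> > 0" and \<gamma>_q: "\<And>t. t \<in> {1..T} \<Longrightarrow> \<gamma> ^ t \<le> q"
    and subharmonic: "\<And>\<sigma>. \<sigma> \<in> X \<Longrightarrow> q * c \<sigma> \<le> kernel_sum T c \<sigma>"
  shows "\<exists>\<kappa>>0. \<forall>N\<ge>1. \<forall>\<sigma>\<in>X. \<kappa> * \<gamma> ^ N * c \<sigma> \<le> W N \<sigma>"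
proof -
  obtain \<kappa> where \<kappa>: "\<kappa> > 0" and initial: "\<forall>N\<in>{1..T}. \<forall>\<sigma>\<in>X. \<kappa> * \<gamma> ^ N * c \<sigma> \<le> W N \<sigma>"
    using W_lower_initial[of c \<gamma> T, OF c_pos \<gamma>] by blast
  have "\<kappa> * \<gamma> ^ N * c \<sigma> \<le> W N \<sigma>" if "N \<ge> 1" "\<sigma> \<in> X" for N \<sigma>
    using that
  proof (induction N arbitrary: \<sigma> rule: less_induct)
    case (less N)
    show ?case
    proof (cases "N \<le> T")
      case True
      then show ?thesis using initial less.prems by auto
    next
      case False
      show ?thesis
      proof (rule W_lower_step[of c q \<gamma> T, OF c_pos q \<gamma> \<gamma>_q subharmonic[OF less.prems(2)]])
        show "\<kappa> \<ge> 0" "T < N" "\<sigma> \<in> X" using \<kappa> False less.prems by auto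
        show "\<kappa> * \<gamma> ^ M * c \<tau> \<le> W M \<tau>" if "1 \<le> M" "M < N" "\<tau> \<in> X" for M \<tau>
          using less.IH[of M \<tau>] that by blast
      qed
    qed
  qed
  then show ?thesis using \<kappa> by blast
qed

end

section \<open>Growth rates\<close>

lemma ln_geometric_lower:
  fixes z \<kappa> \<gamma> :: real
  assumes \<kappa>: "\<kappa> > 0" and \<gamma>: "\<gamma> > 0" and z: "\<kappa> * \<gamma> ^ N \<le> z" and N: "N \<ge> 1"
  shows "ln \<kappa> / real N + ln \<gamma> \<le> ln z / real N"
proof -
  have "ln \<kappa> + real N * ln \<gamma> = ln (\<kappa> * \<gamma> ^ N)"
    using \<kappa> \<gamma> by (simp add: ln_mult ln_realpow)
  also have "\<dots> \<le> ln z"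
  proof -
    have "0 < \<kappa> * \<gamma> ^ N" using \<kappa> \<gamma> by simp
    then show ?thesis using z by (subst ln_le_cancel_iff) auto
  qed
  finally have "(ln \<kappa> + real N * ln \<gamma>) / real N \<le> ln z / real N"
    using N by (intro divide_right_mono) auto
  then show ?thesis using N by (simp add: add_divide_distrib)
qed

lemma growth_rate_zero:
  fixes Z :: "nat \<Rightarrow> real"
  assumes pos: "\<And>N. N \<ge> 1 \<Longrightarrow> Z N > 0" and upper: "\<And>N. N \<ge> 1 \<Longrightarrow> Z N \<le> U"
    and lower: "\<And>q. 0 < q \<Longrightarrow> q < 1 \<Longrightarrow> \<exists>\<kappa>>0. \<forall>N\<ge>1. \<kappa> * q ^ N \<le> Z N"
  shows "(\<lambda>N. ln (Z N) / real N) \<longlonglongrightarrow> 0"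
proof (rule order_tendstoI)
  fix a :: real assume a: "a > 0"
  have "eventually (\<lambda>N. ln U / real N < a) sequentially"
    using order_tendstoD(2)[OF lim_const_over_n[of "ln U"] a] by simp
  moreover have "eventually (\<lambda>N. N \<ge> 1) sequentially" by (rule eventually_ge_at_top)
  ultimately show "eventually (\<lambda>N. ln (Z N) / real N < a) sequentially"
  proof eventually_elim
    case (elim N)
    have "ln (Z N) \<le> ln U" using pos[of N] upper[of N] elim by simp
    then have "ln (Z N) / real N \<le> ln U / real N" by (simp add: divide_right_mono)
    then show ?case using elim by simp
  qed
next
  fix a :: real assume a: "a < 0"
  define q where "q = exp (a / 2)"
  have q: "0 < q" "q < 1" "ln q = a / 2" unfolding q_def using a by auto
  obtain \<kappa> where \<kappa>: "\<kappa> > 0" "\<forall>N\<ge>1. \<kappa> * q ^ N \<le> Z N" using lower[OF q(1,2)] by blast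
  have "eventually (\<lambda>N. a / 2 < ln \<kappa> / real N) sequentially"
    using order_tendstoD(1)[OF lim_const_over_n[of "ln \<kappa>"], of "a / 2"] a by simp
  moreover have "eventually (\<lambda>N. N \<ge> 1) sequentially" by (rule eventually_ge_at_top)
  ultimately show "eventually (\<lambda>N. a < ln (Z N) / real N) sequentially"
  proof eventually_elim
    case (elim N)
    have "ln \<kappa> / real N + ln q \<le> ln (Z N) / real N"
      using \<kappa> q elim by (intro ln_geometric_lower) auto
    then show ?case using elim(1) q(3) by linarith
  qed
qed

lemma growth_rate_positive:
  fixes Z :: "nat \<Rightarrow> real"
  assumes \<gamma>: "\<gamma> > 1" and \<kappa>: "\<kappa> > 0" and lower: "\<And>N. N \<ge> 1 \<Longrightarrow> \<kappa> * \<gamma> ^ N \<le> Z N"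
  shows "\<not> (\<lambda>N. ln (Z N) / real N) \<longlonglongrightarrow> 0"
proof
  assume lim: "(\<lambda>N. ln (Z N) / real N) \<longlonglongrightarrow> 0"
  have ln\<gamma>: "ln \<gamma> > 0" using \<gamma> by simp
  have "eventually (\<lambda>N. ln (Z N) / real N < ln \<gamma> / 2) sequentially"
    using order_tendstoD(2)[OF lim, of "ln \<gamma> / 2"] ln\<gamma> by simp
  moreover have "eventually (\<lambda>N. - ln \<gamma> / 2 < ln \<kappa> / real N) sequentially"
    using order_tendstoD(1)[OF lim_const_over_n[of "ln \<kappa>"], of "- ln \<gamma> / 2"] ln\<gamma> by simp
  moreover have "eventually (\<lambda>N. N \<ge> 1) sequentially" by (rule eventually_ge_at_top)
  ultimately have "eventually (\<lambda>N. False) sequentially"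
  proof eventually_elim
    case (elim N)
    have "ln \<kappa> / real N + ln \<gamma> \<le> ln (Z N) / real N"
      using \<kappa> \<gamma> elim lower[of N] by (intro ln_geometric_lower) auto
    then show ?case using elim by simp
  qed
  then show False by simp
qed

section \<open>The Perron eigenvector\<close>

text \<open>The matrix e^(beta sigma) (p if tau = sigma, 1 - p otherwise) on the states {1, -1} has the
  Perron eigenvalue rho with the positive (left) eigenvector (c1, c2).\<close>
lemma perron_eigenvector:
  fixes p \<beta> :: real
  assumes p: "0 < p" "p < 1"
  defines "\<rho> \<equiv> p * cosh \<beta> + sqrt (p\<^sup>2 * (cosh \<beta>)\<^sup>2 - 2 * p + 1)"
  defines "c1 \<equiv> exp \<beta> * (1 - p)" and "c2 \<equiv> \<rho> - exp \<beta> * p"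
  shows "\<rho> > 0" "c1 > 0" "c2 > 0"
    "exp \<beta> * (c1 * p + c2 * (1 - p)) = \<rho> * c1"
    "exp (- \<beta>) * (c2 * p + c1 * (1 - p)) = \<rho> * c2"
proof -
  define E where "E = exp \<beta>"
  define ch where "ch = cosh \<beta>"
  define D where "D = p\<^sup>2 * ch\<^sup>2 - 2 * p + 1"
  have E: "E > 0" unfolding E_def by simp
  have cosh: "2 * E * ch - E\<^sup>2 = 1"
    unfolding ch_def E_def cosh_field_def by (simp add: exp_minus field_simps power2_eq_square)
  have ch1: "ch \<ge> 1" unfolding ch_def by (rule cosh_real_ge_1)
  have one_minus_p: "(1 - p)\<^sup>2 > 0" using p by simp
  have "p\<^sup>2 * 1 \<le> p\<^sup>2 * ch\<^sup>2" using ch1 by (intro mult_left_mono) (simp_all add: one_le_power)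
  then have "(1 - p)\<^sup>2 \<le> D" unfolding D_def by (simp add: power2_eq_square algebra_simps)
  then have D_pos: "D > 0" using one_minus_p by linarith
  have \<rho>: "\<rho> = p * ch + sqrt D" unfolding \<rho>_def ch_def D_def ..
  show "\<rho> > 0" unfolding \<rho> using p ch1 D_pos by (simp add: add_pos_nonneg)
  show "c1 > 0" unfolding c1_def using p by simp
  have "D - (p * (E - ch))\<^sup>2 = p\<^sup>2 * (2 * E * ch - E\<^sup>2) - 2 * p + 1"
    unfolding D_def by (simp add: power2_eq_square algebra_simps)
  also have "\<dots> = (1 - p)\<^sup>2" unfolding cosh by (simp add: power2_eq_square algebra_simps)
  finally have "(p * (E - ch))\<^sup>2 < D" using one_minus_p by linarith
  then have "p * (E - ch) < sqrt D" by (rule real_less_rsqrt)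
  then show "c2 > 0" unfolding c2_def \<rho> E_def[symmetric] by (simp add: algebra_simps)
  show "exp \<beta> * (c1 * p + c2 * (1 - p)) = \<rho> * c1"
    unfolding c1_def c2_def by (simp add: algebra_simps)
  have quadratic: "\<rho>\<^sup>2 = 2 * p * ch * \<rho> - 2 * p + 1"
    unfolding \<rho> using D_pos unfolding D_def by (simp add: power2_eq_square algebra_simps)
  have "E * \<rho> * c2 = E * \<rho>\<^sup>2 - E\<^sup>2 * p * \<rho>"
    unfolding c2_def E_def by (simp add: power2_eq_square algebra_simps)
  also have "\<dots> = p * \<rho> * (2 * E * ch - E\<^sup>2) - 2 * p * E + E"
    unfolding quadratic by (simp add: algebra_simps power2_eq_square)
  also have "\<dots> = p * \<rho> - 2 * p * E + E"
    unfolding cosh by simp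
  also have "\<dots> = c2 * p + c1 * (1 - p)"
    unfolding c1_def c2_def E_def by (simp add: algebra_simps)
  finally show "exp (- \<beta>) * (c2 * p + c1 * (1 - p)) = \<rho> * c2"
    using E unfolding E_def by (simp add: exp_minus field_simps)
qed

section \<open>The annealed critical point\<close>

text \<open>The number p is the probability that the chain
  is in the same state at the two ends of an interarrival interval.\<close>
locale mc_pinning =
  fixes K :: "nat \<Rightarrow> real" and \<epsilon> \<beta> :: real
  assumes K_pos: "\<And>n. n \<ge> 1 \<Longrightarrow> K n > 0"
    and K_sums: "(\<lambda>n. K (Suc n)) sums 1"
    and \<epsilon>: "0 \<le> \<epsilon>" "\<epsilon> < 1"
begin

definition p :: real where
  "p = (\<Sum>t. K (Suc t) * (1 + (2 * \<epsilon> - 1) ^ Suc t) / 2)"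

definition \<rho> :: real where
  "\<rho> = p * cosh \<beta> + sqrt (p\<^sup>2 * (cosh \<beta>)\<^sup>2 - 2 * p + 1)"

text \<open>The positive eigenvector of the mean kernel, indexed by the states 1 and -1.\<close>
definition c :: "real \<Rightarrow> real" where
  "c \<sigma> = (if \<sigma> = 1 then exp \<beta> * (1 - p) else \<rho> - exp \<beta> * p)"

lemma power_bound: "\<bar>(2 * \<epsilon> - 1) ^ n\<bar> \<le> 1"
  using \<epsilon> by (simp add: power_abs power_le_one)

text \<open>The interarrival law split according to whether the chain has the same state at both
  ends of the interval (probability (1 + (2 epsilon - 1)^t) / 2) or not.\<close>
lemma same_state_sums:
  "(\<lambda>t. K (Suc t) * (1 + (2 * \<epsilon> - 1) ^ Suc t) / 2) sums p"
  "(\<lambda>t. K (Suc t) * (1 - (2 * \<epsilon> - 1) ^ Suc t) / 2) sums (1 - p)"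
proof -
  let ?A = "\<lambda>t. K (Suc t) * (1 + (2 * \<epsilon> - 1) ^ Suc t) / 2"
  have "0 \<le> ?A t \<and> ?A t \<le> K (Suc t)" for t
    using K_pos[of "Suc t"] power_bound[of "Suc t"] by (auto simp: abs_le_iff)
  then have "summable ?A"
    by (intro summable_comparison_test'[OF sums_summable[OF K_sums], of 0]) auto
  then show A: "?A sums p" unfolding p_def by (rule summable_sums)
  have "(\<lambda>t. K (Suc t) - ?A t) sums (1 - p)" by (rule sums_diff[OF K_sums A])
  then show "(\<lambda>t. K (Suc t) * (1 - (2 * \<epsilon> - 1) ^ Suc t) / 2) sums (1 - p)"
    by (simp add: field_simps)
qed

text \<open>Both alternatives have positive probability, the first for interarrival time 2 and the
  second for interarrival time 1 (here epsilon < 1 is used).\<close>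
lemma p_bounds: "0 < p" "p < 1"
proof -
  let ?r = "2 * \<epsilon> - 1"
  have sums_pos: "0 < s" if "f sums s" "\<And>n. 0 \<le> f n" "0 < f i" for f :: "nat \<Rightarrow> real" and s i
    using suminf_pos2[OF sums_summable[OF that(1)] that(2,3)] sums_unique[OF that(1)] by simp
  have "0 \<le> K (Suc t) * (1 + ?r ^ Suc t) / 2" for t
    using K_pos[of "Suc t"] power_bound[of "Suc t"] by (auto simp: abs_le_iff)
  moreover have "0 < K (Suc 1) * (1 + ?r ^ Suc 1) / 2"
    using K_pos[of "Suc 1"] by (simp add: add_pos_nonneg)
  ultimately show "0 < p" by (rule sums_pos[OF same_state_sums(1)])
  have "0 \<le> K (Suc t) * (1 - ?r ^ Suc t) / 2" for t
    using K_pos[of "Suc t"] power_bound[of "Suc t"] by (auto simp: abs_le_iff)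
  moreover have "0 < K (Suc 0) * (1 - ?r ^ Suc 0) / 2"
    using K_pos[of 1] \<epsilon> by simp
  ultimately have "0 < 1 - p" by (rule sums_pos[OF same_state_sums(2)])
  then show "p < 1" by simp
qed

lemma \<rho>_pos: "\<rho> > 0"
  using perron_eigenvector(1)[OF p_bounds] unfolding \<rho>_def .

lemma c_pos: "\<sigma> \<in> {-1, 1} \<Longrightarrow> c \<sigma> > 0"
  using perron_eigenvector(2,3)[OF p_bounds, of \<beta>] unfolding c_def \<rho>_def by auto

lemma c_eigenvector:
  "\<sigma> \<in> {-1, 1} \<Longrightarrow> exp (\<beta> * \<sigma>) * (c \<sigma> * p + c (- \<sigma>) * (1 - p)) = \<rho> * c \<sigma>"
  using perron_eigenvector(4,5)[OF p_bounds, of \<beta>] unfolding c_def \<rho>_def by auto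

definition kernel :: "real \<Rightarrow> nat \<Rightarrow> real \<Rightarrow> real" where
  "kernel h t \<sigma> = exp (\<beta> * \<sigma> + h) * K t * (\<Sum>\<tau>\<in>{-1, 1}. trans_prob \<epsilon> t \<tau> \<sigma> * c \<tau>)"

lemma kernel_nonneg: "\<sigma> \<in> {-1, 1} \<Longrightarrow> 0 \<le> kernel h (Suc t) \<sigma>"
  unfolding kernel_def using K_pos[of "Suc t"] c_pos trans_prob_nonneg[of \<epsilon>] \<epsilon>
  by (intro mult_nonneg_nonneg sum_nonneg) (auto simp: less_imp_le)

text \<open>Summed over the interarrival time, the kernel acts on c as multiplication by
  e^h rho: this is where the formula for the critical point comes from.\<close>
lemma kernel_sums: "\<sigma> \<in> {-1, 1} \<Longrightarrow> (\<lambda>t. kernel h (Suc t) \<sigma>) sums (exp h * \<rho> * c \<sigma>)"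
proof -
  assume \<sigma>: "\<sigma> \<in> {-1, 1}"
  let ?A = "\<lambda>t. K (Suc t) * (1 + (2 * \<epsilon> - 1) ^ Suc t) / 2"
  let ?B = "\<lambda>t. K (Suc t) * (1 - (2 * \<epsilon> - 1) ^ Suc t) / 2"
  have "kernel h (Suc t) \<sigma> = exp (\<beta> * \<sigma> + h) * (c \<sigma> * ?A t + c (- \<sigma>) * ?B t)" for t
    using \<sigma> unfolding kernel_def trans_prob_def sum_pm1 by (auto simp: field_simps)
  moreover have "(\<lambda>t. exp (\<beta> * \<sigma> + h) * (c \<sigma> * ?A t + c (- \<sigma>) * ?B t))
      sums (exp (\<beta> * \<sigma> + h) * (c \<sigma> * p + c (- \<sigma>) * (1 - p)))"
    by (intro sums_mult sums_add same_state_sums)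
  moreover have "exp (\<beta> * \<sigma> + h) * (c \<sigma> * p + c (- \<sigma>) * (1 - p)) = exp h * \<rho> * c \<sigma>"
    using c_eigenvector[OF \<sigma>] by (simp add: exp_add mult.assoc)
  ultimately show ?thesis by simp
qed

lemma kernel_partial_le:
  assumes "\<sigma> \<in> {-1, 1}"
  shows "(\<Sum>t\<in>{1..n}. kernel h t \<sigma>) \<le> exp h * \<rho> * c \<sigma>"
proof -
  have "(\<Sum>t\<in>{1..n}. kernel h t \<sigma>) = (\<Sum>t<n. kernel h (Suc t) \<sigma>)"
    by (simp add: sum.atLeast1_atMost_eq)
  also have "\<dots> \<le> exp h * \<rho> * c \<sigma>"
    using sum_le_suminf[OF sums_summable[OF kernel_sums[OF assms]], of "{..<n}"]
      kernel_nonneg[OF assms] sums_unique[OF kernel_sums[OF assms]] by simp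
  finally show ?thesis .
qed

lemma kernel_partial_exceeds:
  assumes "q < exp h * \<rho>"
  shows "\<exists>T\<ge>1. \<forall>\<sigma>\<in>{-1, 1}. q * c \<sigma> \<le> (\<Sum>t\<in>{1..T}. kernel h t \<sigma>)"
proof -
  have "eventually (\<lambda>n. q * c \<sigma> < (\<Sum>t\<in>{1..n}. kernel h t \<sigma>)) sequentially"
    if \<sigma>: "\<sigma> \<in> {-1, 1}" for \<sigma>
  proof -
    have "(\<lambda>n. \<Sum>t\<in>{1..n}. kernel h t \<sigma>) \<longlonglongrightarrow> exp h * \<rho> * c \<sigma>"
      using kernel_sums[OF \<sigma>] unfolding sums_def by (simp add: sum.atLeast1_atMost_eq)
    moreover have "q * c \<sigma> < exp h * \<rho> * c \<sigma>" using assms c_pos[OF \<sigma>] by simp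
    ultimately show ?thesis by (rule order_tendstoD(1))
  qed
  then have "eventually (\<lambda>n. \<forall>\<sigma>\<in>{-1, 1}. q * c \<sigma> < (\<Sum>t\<in>{1..n}. kernel h t \<sigma>)) sequentially"
    by (intro eventually_ball_finite) auto
  then have "eventually (\<lambda>n. n \<ge> 1 \<and> (\<forall>\<sigma>\<in>{-1, 1}. q * c \<sigma> < (\<Sum>t\<in>{1..n}. kernel h t \<sigma>)))
      sequentially"
    by (intro eventually_conj eventually_ge_at_top)
  then show ?thesis
    unfolding eventually_sequentially by (meson less_imp_le order_refl)
qed

lemma Zann_renewal_system:
  "renewal_system {-1, 1} (Zann_at K \<epsilon> \<beta> h) (\<lambda>\<sigma>. exp (\<beta> * \<sigma> + h)) K (trans_prob \<epsilon>) (1 / 2)"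
proof (unfold_locales)
  fix N :: nat and \<sigma> :: real assume "N \<ge> 1" "\<sigma> \<in> {-1, 1}"
  then show "Zann_at K \<epsilon> \<beta> h N \<sigma> = exp (\<beta> * \<sigma> + h) * (1 / 2 * K N +
      (\<Sum>t\<in>{1..<N}. K t * (\<Sum>\<tau>\<in>{-1, 1}. trans_prob \<epsilon> t \<tau> \<sigma> * Zann_at K \<epsilon> \<beta> h (N - t) \<tau>)))"
    by (simp add: Zann_at_renewal_eq)
qed (use K_pos trans_prob_nonneg trans_prob_sum \<epsilon> in auto)

lemma Zann_pos:
  assumes "N \<ge> 1"
  shows "Zann K \<epsilon> N \<beta> h > 0"
proof -
  interpret Z: renewal_system "{-1, 1}" "Zann_at K \<epsilon> \<beta> h" "\<lambda>\<sigma>. exp (\<beta> * \<sigma> + h)" K "trans_prob \<epsilon>" "1 / 2"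
    by (rule Zann_renewal_system)
  show ?thesis
    unfolding Zann_split using Z.W_pos[OF assms, of 1] Z.W_pos[OF assms, of "-1"] by simp
qed

text \<open>For e^h rho \<le> 1 the vector c is super-harmonic, so the partition functions stay bounded.\<close>
lemma Zann_bounded:
  assumes "exp h * \<rho> \<le> 1"
  shows "\<exists>U. \<forall>N\<ge>1. Zann K \<epsilon> N \<beta> h \<le> U"
proof -
  interpret Z: renewal_system "{-1, 1}" "Zann_at K \<epsilon> \<beta> h" "\<lambda>\<sigma>. exp (\<beta> * \<sigma> + h)" K "trans_prob \<epsilon>" "1 / 2"
    by (rule Zann_renewal_system)
  define C where "C = max (1 / (2 * c 1)) (1 / (2 * c (-1)))"
  have C: "C \<ge> 0" using c_pos[of 1] unfolding C_def by (simp add: le_max_iff_disj)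
  have C_c: "1 / 2 \<le> C * c \<tau>" if \<tau>: "\<tau> \<in> {-1, 1}" for \<tau>
  proof -
    have "1 / (2 * c \<tau>) \<le> C" using \<tau> unfolding C_def by auto
    then show ?thesis using c_pos[OF \<tau>] by (simp add: field_simps)
  qed
  have superharmonic: "Z.kernel_sum n c \<sigma> \<le> c \<sigma>" if \<sigma>: "\<sigma> \<in> {-1, 1}" for n \<sigma>
  proof -
    have "Z.kernel_sum n c \<sigma> = (\<Sum>t\<in>{1..n}. kernel h t \<sigma>)"
      unfolding Z.kernel_sum_def kernel_def ..
    also have "\<dots> \<le> exp h * \<rho> * c \<sigma>" by (rule kernel_partial_le[OF \<sigma>])
    also have "\<dots> \<le> c \<sigma>" using assms c_pos[OF \<sigma>] by (simp add: mult_left_le_one_le)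
    finally show ?thesis .
  qed
  have "Zann K \<epsilon> N \<beta> h \<le> C * c 1 + C * c (-1)" if "N \<ge> 1" for N
  proof -
    have "Zann_at K \<epsilon> \<beta> h N \<sigma> \<le> C * c \<sigma>" if "\<sigma> \<in> {-1, 1}" for \<sigma>
      using Z.W_upper[of c C, OF c_pos C C_c superharmonic] \<open>N \<ge> 1\<close> that by blast
    then show ?thesis unfolding Zann_split by (simp add: add_mono)
  qed
  then show ?thesis by blast
qed

lemma Zann_lower:
  assumes q: "q > 0" and \<gamma>: "\<gamma> > 0" and \<gamma>_q: "\<And>t. t \<in> {1..T} \<Longrightarrow> \<gamma> ^ t \<le> q"
    and subharmonic: "\<And>\<sigma>. \<sigma> \<in> {-1, 1} \<Longrightarrow> q * c \<sigma> \<le> (\<Sum>t\<in>{1..T}. kernel h t \<sigma>)"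
  shows "\<exists>\<kappa>>0. \<forall>N\<ge>1. \<kappa> * \<gamma> ^ N \<le> Zann K \<epsilon> N \<beta> h"
proof -
  interpret Z: renewal_system "{-1, 1}" "Zann_at K \<epsilon> \<beta> h" "\<lambda>\<sigma>. exp (\<beta> * \<sigma> + h)" K "trans_prob \<epsilon>" "1 / 2"
    by (rule Zann_renewal_system)
  have "q * c \<sigma> \<le> Z.kernel_sum T c \<sigma>" if "\<sigma> \<in> {-1, 1}" for \<sigma>
    using subharmonic[OF that] unfolding Z.kernel_sum_def kernel_def .
  then obtain \<kappa> where \<kappa>: "\<kappa> > 0" and lower: "\<forall>N\<ge>1. \<forall>\<sigma>\<in>{-1, 1}. \<kappa> * \<gamma> ^ N * c \<sigma> \<le> Zann_at K \<epsilon> \<beta> h N \<sigma>"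
    using Z.W_lower[of c q \<gamma> T, OF c_pos q \<gamma> \<gamma>_q] by blast
  have "\<kappa> * (c 1 + c (-1)) * \<gamma> ^ N \<le> Zann K \<epsilon> N \<beta> h" if "N \<ge> 1" for N
    using lower that unfolding Zann_split by (fastforce simp: algebra_simps)
  moreover have "\<kappa> * (c 1 + c (-1)) > 0" using \<kappa> c_pos[of 1] c_pos[of "-1"] by simp
  ultimately show ?thesis by blast
qed

lemma critical_growth_rate: "(\<lambda>N. ln (Zann K \<epsilon> N \<beta> (- ln \<rho>)) / real N) \<longlonglongrightarrow> 0"
proof -
  have critical: "exp (- ln \<rho>) * \<rho> = 1" using \<rho>_pos by (simp add: exp_minus)
  obtain U where U: "\<forall>N\<ge>1. Zann K \<epsilon> N \<beta> (- ln \<rho>) \<le> U"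
    using Zann_bounded critical by fastforce
  show ?thesis
  proof (rule growth_rate_zero)
    fix q :: real assume q: "0 < q" "q < 1"
    then obtain T where "\<forall>\<sigma>\<in>{-1, 1}. q * c \<sigma> \<le> (\<Sum>t\<in>{1..T}. kernel (- ln \<rho>) t \<sigma>)"
      using kernel_partial_exceeds[of q "- ln \<rho>"] critical by auto
    moreover have "q ^ t \<le> q" if "t \<in> {1..T}" for t
      using power_decreasing[of 1 t q] q that by simp
    ultimately show "\<exists>\<kappa>>0. \<forall>N\<ge>1. \<kappa> * q ^ N \<le> Zann K \<epsilon> N \<beta> (- ln \<rho>)"
      using Zann_lower[of q q T] q by blast
  qed (use Zann_pos U in auto)
qed

text \<open>Above - ln rho, the factor e^h rho exceeds 1 and a truncated kernel still has
  factor q > 1 on c; taking gamma = q^(1/T) gives exponential growth.\<close>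
lemma supercritical_growth_rate:
  assumes "h > - ln \<rho>"
  shows "\<not> (\<lambda>N. ln (Zann K \<epsilon> N \<beta> h) / real N) \<longlonglongrightarrow> 0"
proof -
  have "1 < exp h * \<rho>"
  proof -
    have "1 = exp (- ln \<rho>) * \<rho>" using \<rho>_pos by (simp add: exp_minus)
    also have "\<dots> < exp h * \<rho>" using assms \<rho>_pos by simp
    finally show ?thesis .
  qed
  define q where "q = (1 + exp h * \<rho>) / 2"
  have q: "1 < q" "q < exp h * \<rho>" unfolding q_def using \<open>1 < exp h * \<rho>\<close> by auto
  obtain T where T: "T \<ge> 1" "\<forall>\<sigma>\<in>{-1, 1}. q * c \<sigma> \<le> (\<Sum>t\<in>{1..T}. kernel h t \<sigma>)"
    using kernel_partial_exceeds[OF q(2)] by blast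
  define \<gamma> where "\<gamma> = root T q"
  have \<gamma>: "\<gamma> > 1" unfolding \<gamma>_def using q T by simp
  have \<gamma>_q: "\<gamma> ^ t \<le> q" if "t \<in> {1..T}" for t
  proof -
    have "\<gamma> ^ t \<le> \<gamma> ^ T" using \<gamma> that by (intro power_increasing) auto
    also have "\<dots> = q" unfolding \<gamma>_def using q T by simp
    finally show ?thesis .
  qed
  have "\<exists>\<kappa>>0. \<forall>N\<ge>1. \<kappa> * \<gamma> ^ N \<le> Zann K \<epsilon> N \<beta> h"
    using q \<gamma> by (intro Zann_lower[OF _ _ \<gamma>_q T(2)[rule_format]]) auto
  then obtain \<kappa> where \<kappa>: "\<kappa> > 0" and lower: "\<And>N. N \<ge> 1 \<Longrightarrow> \<kappa> * \<gamma> ^ N \<le> Zann K \<epsilon> N \<beta> h"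
    by blast
  show ?thesis by (rule growth_rate_positive[OF \<gamma> \<kappa> lower])
qed

theorem hc_ann_eq: "hc_ann K \<epsilon> \<beta> = - ln \<rho>"
  unfolding hc_ann_def
proof (rule cSup_eq_maximum)
  show "- ln \<rho> \<in> {h. (\<lambda>N. ln (Zann K \<epsilon> N \<beta> h) / real N) \<longlonglongrightarrow> 0}"
    using critical_growth_rate by simp
  fix h assume "h \<in> {h. (\<lambda>N. ln (Zann K \<epsilon> N \<beta> h) / real N) \<longlonglongrightarrow> 0}"
  then show "h \<le> - ln \<rho>" using supercritical_growth_rate by force
qed

end

theorem mainTheorem3:
  fixes K :: "nat \<Rightarrow> real" and \<epsilon> \<beta> :: real
  assumes Kpos: "\<And>n. n \<ge> 1 \<Longrightarrow> K n > 0"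
    and Ksum: "(\<lambda>n. K (Suc n)) sums 1"
    and eps: "0 \<le> \<epsilon>" "\<epsilon> < 1"
    and beta: "\<beta> \<ge> 0"
  shows "hc_ann K \<epsilon> \<beta> =
    (let p = (\<Sum>t. K (Suc t) * (1 + (2 * \<epsilon> - 1) ^ Suc t) / 2)
     in - ln (p * cosh \<beta> + sqrt (p\<^sup>2 * (cosh \<beta>)\<^sup>2 - 2 * p + 1)))"
proof -
  interpret mc_pinning K \<epsilon> \<beta>
    using Kpos Ksum eps by unfold_locales
  show ?thesis
    unfolding hc_ann_eq \<rho>_def p_def Let_def ..
qed

end
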